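(* Let $q=3^m$ with $m$ a positive integer. Let $b\in\mathbb{F}_q^*$ and $\delta\in\mathbb{F}_{q^2}$. Put $$A=-b,\quad B=b\delta^{q+1}(\delta^q+\delta),\quad C=(\delta^q-\delta)^2-b^{-1},$$ and suppose that $P(x)=b(x^q+x+\delta)^{q+2}-x$ permutes $\mathbb{F}_{q^2}$. (1) If $C=0$, then the compositional inverse of $P(x)$ over $\mathbb{F}_{q^2}$ is $$P^{-1}(x)=b\left(A^{-q/3}\left((x^q+x)-B\right)^{q/3}+\delta\right)^{q+2}-x.$$ (2) If $C$ is not a square in $\mathbb{F}_q$, then the compositional inverse of $P(x)$ over $\mathbb{F}_{q^2}$ is $$P^{-1}(x)=b\left(\delta+\frac{N_{3^m/3}(C)}{1-N_{3^m/3}(C)}\sum_{i=0}^{m-1}A^{-3^i}C^{-\frac{3^{i+1}-1}{2}}\left(x^q+x-B\right)^{3^i}\right)^{q+2}-x.$$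
   Context: For $a\in\mathbb{F}_{3^m}$, $N_{3^m/3}(a)=a^{(3^m-1)/2}$ is the norm to $\mathbb{F}_3$. The compositional inverse of a permutation polynomial $f$ of $\mathbb{F}_{Q}$ is the unique polynomial $f^{-1}$ (modulo $x^Q-x$) with $f(f^{-1}(c))=f^{-1}(f(c))=c$ for all $c\in\mathbb{F}_Q$. *)

theory Defs
  imports Main
begin

text \<open>Norm from F_{3^m} to F_3: N(a) = a^((3^m-1)/2).\<close>
definition norm3 :: "nat \<Rightarrow> 'a::field \<Rightarrow> 'a" where
  "norm3 m a = a ^ ((3 ^ m - 1) div 2)"

definition comp_inverse_on :: "('a \<Rightarrow> 'a) \<Rightarrow> ('a \<Rightarrow> 'a) \<Rightarrow> bool" where
  "comp_inverse_on f g \<longleftrightarrow> (\<forall>c. f (g c) = c \<and> g (f c) = c)"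

end

theory Submission
  imports Defs "HOL-Computational_Algebra.Polynomial" "HOL-Computational_Algebra.Primes"
begin

text \<open>
  Write \<open>T x = x^q + x\<close>. Since \<open>T\<close> takes values in \<open>\<bbbF>\<^sub>q\<close> and
  \<open>x = b (T x + \<delta>)^(q+2) - P x\<close>, inverting \<open>P\<close> amounts to recovering \<open>u = T x\<close> from
  \<open>P x\<close>. In characteristic 3 a direct computation gives \<open>T (P x) - B = A (u^3 - C u)\<close>.
  If \<open>C = 0\<close>, \<open>u\<close> is the cube root \<open>(A\<^sup>-\<^sup>1 (T (P x) - B))^(q/3)\<close> in \<open>\<bbbF>\<^sub>q\<close>.
  If \<open>C\<close> is a nonsquare in \<open>\<bbbF>\<^sub>q\<close>, additivity of Frobenius makes the sum
  \<open>\<Sum>\<^sub>i C^(-(3^(i+1)-1)/2) (u^3 - C u)^(3^i)\<close> telescope to \<open>u^q / N(C) - u = (1/N(C) - 1) u\<close>.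
  Here \<open>N(C) \<noteq> 1\<close>, since otherwise this polynomial of degree \<open>3^(m-1)\<close> in
  \<open>u^3 - C u\<close> would vanish on the image of \<open>\<bbbF>\<^sub>q\<close> under the map \<open>u \<mapsto> u^3 - C u\<close>,
  which is injective there and so has \<open>q\<close> elements.
\<close>

lemma of_nat_card_UNIV_eq_0: "of_nat (card (UNIV :: 'a::{ring_1,finite} set)) = (0::'a)"
proof -
  have "(\<Sum>y\<in>UNIV. y + 1) = (\<Sum>y\<in>(UNIV::'a set). y)"
    by (rule sum.reindex_bij_witness[of _ "\<lambda>y. y - 1" "\<lambda>y. y + 1"]) auto
  then show ?thesis
    by (simp add: sum.distrib)
qed

lemma power_card_UNIV_eq_self:
  fixes x :: "'a::{field,finite}"
  shows "x ^ card (UNIV :: 'a set) = x"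
proof (cases "x = 0")
  case False
  let ?U = "UNIV - {0::'a}"
  have "(\<Prod>y\<in>?U. x * y) = (\<Prod>y\<in>?U. y)"
    by (rule prod.reindex_bij_witness[of _ "\<lambda>y. y / x" "\<lambda>y. x * y"]) (use False in auto)
  then have "x ^ card ?U * (\<Prod>y\<in>?U. y) = 1 * (\<Prod>y\<in>?U. y)"
    by (simp add: prod.distrib)
  then have "x ^ card ?U = 1"
    by (simp del: mult_1)
  moreover have "card (UNIV :: 'a set) = Suc (card ?U)"
    by (simp add: card_Diff_singleton finite_UNIV_card_ge_0 Suc_leI)
  ultimately show ?thesis
    by (simp only: power_Suc mult_1_right)
qed (simp add: finite_UNIV_card_ge_0)

lemma CHAR_eq_3_iff: "CHAR('a::{semiring_1,zero_neq_one}) = 3 \<longleftrightarrow> (3::'a) = 0"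
proof
  assume "(3::'a) = 0"
  then have "CHAR('a) dvd 3"
    using of_nat_eq_0_iff_char_dvd[of 3, where ?'a='a] by simp
  moreover have "prime (3::nat)"
    by simp
  ultimately show "CHAR('a) = 3"
    using prime_nat_iff[of 3] CHAR_not_1[where 'a='a] by (metis One_nat_def)
qed (metis of_nat_CHAR of_nat_numeral)

lemma CHAR_eq_3_of_card:
  assumes "card (UNIV :: 'a::{field,finite} set) = 3 ^ k"
  shows "CHAR('a) = 3"
proof -
  have "(3::'a) ^ k = 0"
    using of_nat_card_UNIV_eq_0[where 'a='a] assms by simp
  then show ?thesis
    by (simp add: CHAR_eq_3_iff)
qed

lemma (in comm_ring_1) freshmans_dream_diff:
  assumes "prime CHAR('a)" and "m = CHAR('a) ^ n"
  shows "(x - y) ^ m = x ^ m - y ^ m"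
proof -
  have "x ^ m = (x - y) ^ m + y ^ m"
    using freshmans_dream'[OF assms, of "x - y" y] by simp
  then show ?thesis
    by (simp add: algebra_simps)
qed

lemma char3_power_add:
  fixes x y :: "'a::comm_ring_1"
  assumes "(3::'a) = 0"
  shows "(x + y) ^ 3 ^ k = x ^ 3 ^ k + y ^ 3 ^ k"
  using freshmans_dream'[where 'a='a and m="3 ^ k" and n=k] CHAR_eq_3_iff[THEN iffD2, OF assms] by simp

lemma char3_power_diff:
  fixes x y :: "'a::comm_ring_1"
  assumes "(3::'a) = 0"
  shows "(x - y) ^ 3 ^ k = x ^ 3 ^ k - y ^ 3 ^ k"
  using freshmans_dream_diff[where 'a='a and m="3 ^ k" and n=k] CHAR_eq_3_iff[THEN iffD2, OF assms] by simp

lemma card_roots_power_add_linear_le: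
  fixes s :: "'a::field"
  assumes "q > 1"
  shows "card {x. x ^ q + s * x = 0} \<le> q"
proof -
  define p where "p = monom 1 q + [:0, s:]"
  have "coeff p q = 1"
    using assms by (simp add: p_def coeff_pCons split: nat.split)
  then have "p \<noteq> 0"
    by auto
  moreover have "degree p \<le> q"
    unfolding p_def using assms by (intro degree_add_le) (auto simp: degree_monom_le)
  ultimately have "card {x. poly p x = 0} \<le> q"
    using card_poly_roots_bound[of p] by linarith
  then show ?thesis
    by (simp add: p_def poly_monom mult.commute)
qed

lemma card_roots_sum_power_3_le:
  fixes c :: "nat \<Rightarrow> 'a::field"
  assumes "m > 0" and "c 0 \<noteq> 0"
  shows "card {v. (\<Sum>i<m. c i * v ^ 3 ^ i) = 0} \<le> 3 ^ (m - 1)"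
proof -
  define p where "p = (\<Sum>i<m. monom (c i) (3 ^ i))"
  have "coeff p 1 = (\<Sum>i<m. if i = 0 then c i else 0)"
    unfolding p_def coeff_sum coeff_monom by (rule sum.cong) auto
  then have "coeff p 1 = c 0"
    using \<open>m > 0\<close> by simp
  then have "p \<noteq> 0"
    using \<open>c 0 \<noteq> 0\<close> by auto
  moreover have "degree p \<le> 3 ^ (m - 1)"
    unfolding p_def
  proof (rule degree_sum_le)
    fix i assume "i \<in> {..<m}"
    then have "(3::nat) ^ i \<le> 3 ^ (m - 1)"
      by (intro power_increasing) auto
    then show "degree (monom (c i) (3 ^ i)) \<le> 3 ^ (m - 1)"
      using degree_monom_le order.trans by blast
  qed simp
  ultimately have "card {v. poly p v = 0} \<le> 3 ^ (m - 1)"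
    using card_poly_roots_bound[of p] by linarith
  then show ?thesis
    by (simp add: p_def poly_sum poly_monom)
qed

lemma card_fibre_power_add_self_le:
  fixes t :: "'a::{field,finite}"
  assumes q1: "q > 1" and diff: "\<And>x y :: 'a. (x - y) ^ q = x ^ q - y ^ q"
  shows "card {x. x ^ q + x = t} \<le> q"
proof (cases "\<exists>x0. x0 ^ q + x0 = t")
  case True
  then obtain x0 where x0: "x0 ^ q + x0 = t"
    by blast
  define K where "K = {x::'a. x ^ q + 1 * x = 0}"
  have "{x. x ^ q + x = t} \<subseteq> (\<lambda>k. k + x0) ` K"
  proof
    fix x assume "x \<in> {x. x ^ q + x = t}"
    then have "x - x0 \<in> K"
      using x0 by (simp add: K_def diff algebra_simps)
    then show "x \<in> (\<lambda>k. k + x0) ` K"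
      by (auto intro!: image_eqI[where x="x - x0"])
  qed
  then have "card {x. x ^ q + x = t} \<le> card ((\<lambda>k. k + x0) ` K)"
    by (simp add: card_mono)
  also have "\<dots> \<le> card K"
    by (simp add: card_image_le)
  also have "\<dots> \<le> q"
    unfolding K_def by (rule card_roots_power_add_linear_le[OF q1])
  finally show ?thesis .
qed simp

lemma card_fixed_points_power:
  fixes q :: nat
  assumes card: "card (UNIV :: 'a::{field,finite} set) = q ^ 2" and q: "q = CHAR('a) ^ n"
  shows "card {x::'a. x ^ q = x} = q"
proof -
  have prime: "prime CHAR('a)"
    by (simp add: finite_imp_CHAR_pos prime_CHAR_semidom)
  have "card {0::'a, 1} \<le> q ^ 2"
    using card by (metis card_mono finite subset_UNIV)
  then have q1: "q > 1"
    using power_mono[of q 1 2] by (cases "q > 1") auto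
  have add: "(x + y) ^ q = x ^ q + y ^ q" for x y :: 'a
    by (rule freshmans_dream'[OF prime q])
  have invol: "(x ^ q) ^ q = x" for x :: 'a
    using power_card_UNIV_eq_self[of x] by (simp add: card power2_eq_square power_mult)
  define F where "F = {x::'a. x ^ q = x}"
  have "F = {x::'a. x ^ q + (-1) * x = 0}"
    unfolding F_def by (auto simp: algebra_simps)
  then have "card F \<le> q"
    using card_roots_power_add_linear_le[OF q1, of "-1::'a"] by simp
  \<comment> \<open>The trace \<open>x \<mapsto> x^q + x\<close> maps onto \<open>F\<close> with fibres of size at most \<open>q\<close>.\<close>
  have "(x ^ q + x) ^ q = x ^ q + x" for x :: 'a
    by (simp add: add invol add.commute)
  then have "UNIV = (\<Union>t\<in>F. {x. x ^ q + x = t})"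
    by (auto simp: F_def)
  then have "q * q \<le> (\<Sum>t\<in>F. card {x. x ^ q + x = t})"
    using card card_UN_le[of F "\<lambda>t. {x. x ^ q + x = t}"] by (simp add: power2_eq_square)
  also have "\<dots> \<le> card F * q"
    using sum_mono[of F _ "\<lambda>_. q", OF card_fibre_power_add_self_le[OF q1 freshmans_dream_diff[OF prime q]]]
    by simp
  finally have "q \<le> card F"
    using q1 by simp
  with \<open>card F \<le> q\<close> show ?thesis
    by (simp add: F_def)
qed

lemma char3_telescope:
  fixes C u :: "'a::field"
  assumes three: "(3::'a) = 0" and "C \<noteq> 0"
  shows "(\<Sum>i<m. inverse C ^ ((3 ^ (i + 1) - 1) div 2) * (u ^ 3 - C * u) ^ 3 ^ i)
       = u ^ 3 ^ m / norm3 m C - u"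
proof -
  define f where "f i = inverse C ^ ((3 ^ i - 1) div 2) * u ^ 3 ^ i" for i
  have exp: "(3 ^ (i + 1) - 1) div 2 = 3 ^ i + (3 ^ i - 1) div (2::nat)" for i
  proof -
    have "odd ((3::nat) ^ i)"
      by simp
    then obtain k where "(3::nat) ^ i = 2 * k + 1"
      by (rule oddE)
    then show ?thesis
      by simp
  qed
  have "inverse C ^ ((3 ^ (i + 1) - 1) div 2) * (u ^ 3 - C * u) ^ 3 ^ i = f (Suc i) - f i" for i
  proof -
    have "(u ^ 3 - C * u) ^ 3 ^ i = u ^ 3 ^ (i + 1) - C ^ 3 ^ i * u ^ 3 ^ i"
      by (simp add: char3_power_diff[OF three] power_mult_distrib flip: power_mult)
    moreover have "inverse C ^ ((3 ^ (i + 1) - 1) div 2) * C ^ 3 ^ i = inverse C ^ ((3 ^ i - 1) div 2)"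
      unfolding exp using \<open>C \<noteq> 0\<close> by (simp add: power_add power_inverse field_simps)
    ultimately show ?thesis
      unfolding f_def Suc_eq_plus1 by (simp only: right_diff_distrib mult.assoc[symmetric])
  qed
  then have "(\<Sum>i<m. inverse C ^ ((3 ^ (i + 1) - 1) div 2) * (u ^ 3 - C * u) ^ 3 ^ i)
      = (\<Sum>i<m. f (Suc i) - f i)"
    by simp
  also have "\<dots> = f m - f 0"
    by (rule sum_lessThan_telescope)
  finally show ?thesis
    by (simp add: f_def norm3_def power_inverse field_simps)
qed

lemma char3_inj_on_cubic_if_nonsquare:
  fixes C :: "'a::field"
  assumes three: "(3::'a) = 0" and q: "q = 3 ^ k" and nonsquare: "\<not> (\<exists>y. y ^ q = y \<and> y ^ 2 = C)"
  shows "inj_on (\<lambda>u. u ^ 3 - C * u) {y. y ^ q = y}"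
proof (rule inj_onI)
  fix u v :: 'a
  assume u: "u \<in> {y. y ^ q = y}" and v: "v \<in> {y. y ^ q = y}" and eq: "u ^ 3 - C * u = v ^ 3 - C * v"
  have cube: "(u - v) ^ 3 = u ^ 3 - v ^ 3"
    using char3_power_diff[OF three, of u v 1] by simp
  have "(u - v) * ((u - v) ^ 2 - C) = (u - v) ^ 3 - C * (u - v)"
    by (simp add: algebra_simps power2_eq_square power3_eq_cube)
  also have "\<dots> = 0"
    using eq by (simp add: cube algebra_simps)
  finally have "(u - v) * ((u - v) ^ 2 - C) = 0" .
  moreover have "(u - v) ^ q = u - v"
    using u v by (simp add: q char3_power_diff[OF three])
  ultimately show "u = v"
    using nonsquare by auto
qed

lemma norm3_ne_1_if_nonsquare:
  fixes C :: "'a::{field,finite}"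
  assumes "m > 0" and q: "q = 3 ^ m" and card: "card (UNIV :: 'a set) = q ^ 2"
    and nonsquare: "\<not> (\<exists>y. y ^ q = y \<and> y ^ 2 = C)"
  shows "norm3 m C \<noteq> 1"
proof
  assume norm: "norm3 m C = 1"
  define F where "F = {y::'a. y ^ q = y}"
  define L where "L u = u ^ 3 - C * u" for u :: 'a
  define c where "c i = inverse C ^ ((3 ^ (i + 1) - 1) div 2)" for i :: nat
  have char: "CHAR('a) = 3"
    using card by (intro CHAR_eq_3_of_card) (simp add: q flip: power_mult)
  then have three: "(3::'a) = 0"
    by (simp add: CHAR_eq_3_iff)
  have "(0::'a) ^ q = 0"
    by (simp add: q)
  then have "C \<noteq> 0"
    using nonsquare by force
  have roots: "L ` F \<subseteq> {v. (\<Sum>i<m. c i * v ^ 3 ^ i) = 0}"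
  proof
    fix v assume "v \<in> L ` F"
    then obtain u where "u ^ q = u" and "v = L u"
      by (auto simp: F_def)
    then show "v \<in> {v. (\<Sum>i<m. c i * v ^ 3 ^ i) = 0}"
      using char3_telescope[OF three \<open>C \<noteq> 0\<close>, where m=m and u=u] by (simp add: c_def L_def norm q)
  qed
  have "inj_on L F"
    unfolding L_def F_def by (rule char3_inj_on_cubic_if_nonsquare[OF three q nonsquare])
  then have "card F = card (L ` F)"
    by (simp add: card_image)
  also have "\<dots> \<le> card {v. (\<Sum>i<m. c i * v ^ 3 ^ i) = 0}"
    using roots by (simp add: card_mono)
  also have "\<dots> \<le> 3 ^ (m - 1)"
    using \<open>m > 0\<close> \<open>C \<noteq> 0\<close> by (intro card_roots_sum_power_3_le) (simp_all add: c_def)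
  finally have "card F \<le> 3 ^ (m - 1)" .
  moreover have "card F = 3 ^ m"
    unfolding F_def using card_fixed_points_power[OF card, where n=m] char q by simp
  moreover have "3 ^ (m - 1) < (3::nat) ^ m"
    using \<open>m > 0\<close> by simp
  ultimately show False
    by linarith
qed

lemma char3_trace_identity:
  fixes b \<delta> x :: "'a::field"
  assumes three: "(3::'a) = 0" and q: "q = 3 ^ k" and invol: "\<And>y::'a. (y ^ q) ^ q = y"
    and b_fixed: "b ^ q = b" and "b \<noteq> 0"
  defines "u \<equiv> x ^ q + x"
  shows "(b * (u + \<delta>) ^ (q + 2) - x) ^ q + (b * (u + \<delta>) ^ (q + 2) - x) - b * \<delta> ^ (q + 1) * (\<delta> ^ q + \<delta>)
       = - b * (u ^ 3 - ((\<delta> ^ q - \<delta>) ^ 2 - inverse b) * u)"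
proof -
  have add: "(y + z) ^ q = y ^ q + z ^ q" for y z :: 'a
    unfolding q by (rule char3_power_add[OF three])
  have diff: "(y - z) ^ q = y ^ q - z ^ q" for y z :: 'a
    unfolding q by (rule char3_power_diff[OF three])
  define e where "e = \<delta> ^ q"
  have uq: "u ^ q = u"
    by (simp add: u_def add invol add.commute)
  have y: "b * (u + \<delta>) ^ (q + 2) - x = b * ((u + e) * (u + \<delta>) ^ 2) - x"
    by (simp add: power_add power2_eq_square add uq e_def)
  have Xq: "((u + e) * (u + \<delta>) ^ 2) ^ q = (u + \<delta>) * (u + e) ^ 2"
    by (simp add: power2_eq_square power_mult_distrib add uq e_def invol)
  have yq: "(b * (u + \<delta>) ^ (q + 2) - x) ^ q = b * ((u + \<delta>) * (u + e) ^ 2) - x ^ q"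
    unfolding y diff power_mult_distrib[of b] b_fixed Xq by (rule refl)
  have "(b * (u + \<delta>) ^ (q + 2) - x) ^ q + (b * (u + \<delta>) ^ (q + 2) - x) - b * \<delta> ^ (q + 1) * (\<delta> ^ q + \<delta>)
      = b * ((u + \<delta>) * (u + e) ^ 2) + b * ((u + e) * (u + \<delta>) ^ 2) - b * (e * \<delta>) * (e + \<delta>) - (x ^ q + x)"
    unfolding yq unfolding y by (simp add: e_def power_add algebra_simps)
  also have "\<dots> = - b * u ^ 3 + b * (e - \<delta>) ^ 2 * u + 3 * (b * (u ^ 3 + (\<delta> + e) * u ^ 2 + 2 * \<delta> * e * u)) - u"
    by (simp add: u_def algebra_simps power2_eq_square power3_eq_cube)
  also have "\<dots> = - b * (u ^ 3 - ((e - \<delta>) ^ 2 - inverse b) * u)"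
    using three \<open>b \<noteq> 0\<close> by (simp add: algebra_simps)
  finally show ?thesis
    by (simp add: e_def)
qed

lemma char3_telescope_inverts_cubic:
  fixes A C u :: "'a::field"
  assumes three: "(3::'a) = 0" and "A \<noteq> 0" and "C \<noteq> 0" and "norm3 m C \<noteq> 1" and u: "u ^ 3 ^ m = u"
  shows "norm3 m C / (1 - norm3 m C) *
      (\<Sum>i<m. inverse A ^ 3 ^ i * inverse C ^ ((3 ^ (i + 1) - 1) div 2) * (A * (u ^ 3 - C * u)) ^ 3 ^ i) = u"
proof -
  have cancel: "inverse A ^ n * c * (A * w) ^ n = c * w ^ n" for n and c w :: 'a
    using \<open>A \<noteq> 0\<close> by (simp add: power_mult_distrib power_inverse field_simps)
  have "norm3 m C \<noteq> 0"
    using \<open>C \<noteq> 0\<close> by (simp add: norm3_def)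
  have "(\<Sum>i<m. inverse A ^ 3 ^ i * inverse C ^ ((3 ^ (i + 1) - 1) div 2) * (A * (u ^ 3 - C * u)) ^ 3 ^ i)
      = (\<Sum>i<m. inverse C ^ ((3 ^ (i + 1) - 1) div 2) * (u ^ 3 - C * u) ^ 3 ^ i)"
    by (simp only: cancel)
  also have "\<dots> = u / norm3 m C - u"
    using char3_telescope[OF three \<open>C \<noteq> 0\<close>, where m=m and u=u] u by simp
  finally show ?thesis
    using \<open>norm3 m C \<noteq> 0\<close> \<open>norm3 m C \<noteq> 1\<close> by (simp add: field_simps)
qed

lemma comp_inverse_on_shifted_power:
  fixes P F G :: "'a::ring_1 \<Rightarrow> 'a"
  assumes "bij P" and P: "P = (\<lambda>x. b * F x ^ e - x)" and G: "\<And>x. G (P x) = F x"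
  shows "comp_inverse_on P (\<lambda>y. b * G y ^ e - y)"
  unfolding comp_inverse_on_def
proof
  fix c
  have left: "b * G (P x) ^ e - P x = x" for x
    by (simp add: G) (simp add: P)
  obtain x where "c = P x"
    using \<open>bij P\<close> by (metis bij_pointE)
  then show "P (b * G c ^ e - c) = c \<and> b * G (P c) ^ e - P c = c"
    using left by simp
qed

theorem theorem3p17:
  fixes b \<delta> :: "'a::{field,finite}" and m q :: nat
    and A B C :: 'a and P :: "'a \<Rightarrow> 'a"
  assumes m_pos: "m > 0"
    and q_def: "q = 3 ^ m"
    and card: "card (UNIV :: 'a set) = q ^ 2"
    and b_Fq: "b ^ q = b" and b_nz: "b \<noteq> 0"
    and A_def: "A = - b"
    and B_def: "B = b * \<delta> ^ (q + 1) * (\<delta> ^ q + \<delta>)"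
    and C_def: "C = (\<delta> ^ q - \<delta>) ^ 2 - inverse b"
    and P_def: "P = (\<lambda>x. b * (x ^ q + x + \<delta>) ^ (q + 2) - x)"
    and perm: "bij P"
  shows "(C = 0 \<longrightarrow>
            comp_inverse_on P
              (\<lambda>x. b * (inverse A ^ (q div 3) * ((x ^ q + x) - B) ^ (q div 3) + \<delta>) ^ (q + 2) - x))
       \<and> ((\<not> (\<exists>y. y ^ q = y \<and> y ^ 2 = C)) \<longrightarrow>
            comp_inverse_on P
              (\<lambda>x. b * (\<delta> + norm3 m C / (1 - norm3 m C) *
                  (\<Sum>i<m. inverse A ^ (3 ^ i) * inverse C ^ ((3 ^ (i + 1) - 1) div 2)
                           * (x ^ q + x - B) ^ (3 ^ i))) ^ (q + 2) - x))"
proof -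
  have "CHAR('a) = 3"
    using card by (intro CHAR_eq_3_of_card) (simp add: q_def flip: power_mult)
  then have three: "(3::'a) = 0"
    by (simp add: CHAR_eq_3_iff)
  have invol: "(y ^ q) ^ q = y" for y :: 'a
    using power_card_UNIV_eq_self[of y] by (simp add: card power2_eq_square power_mult)
  have trace_fixed: "(x ^ q + x) ^ q = x ^ q + x" for x :: 'a
    using char3_power_add[OF three, of "x ^ q" x m] by (simp add: invol flip: q_def)
  have "A \<noteq> 0"
    using b_nz A_def by simp
  have trace_P: "P x ^ q + P x - B = A * ((x ^ q + x) ^ 3 - C * (x ^ q + x))" for x
    using char3_trace_identity[OF three q_def invol b_Fq b_nz, of x \<delta>]
    by (simp add: P_def A_def B_def C_def)
  show ?thesis
  proof (intro conjI impI comp_inverse_on_shifted_power[OF perm P_def])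
    fix x :: 'a
    assume "C = 0"
    have "3 * (q div 3) = q"
      using q_def m_pos by (cases m) auto
    then have "inverse A ^ (q div 3) * (P x ^ q + P x - B) ^ (q div 3) = (x ^ q + x) ^ q"
      using \<open>A \<noteq> 0\<close> by (simp add: trace_P \<open>C = 0\<close> power_mult_distrib power_inverse flip: power_mult)
    then show "inverse A ^ (q div 3) * (P x ^ q + P x - B) ^ (q div 3) + \<delta> = x ^ q + x + \<delta>"
      by (simp add: trace_fixed)
  next
    fix x :: 'a
    assume nonsquare: "\<not> (\<exists>y. y ^ q = y \<and> y ^ 2 = C)"
    have "(0::'a) ^ q = 0"
      by (simp add: q_def)
    then have "C \<noteq> 0"
      using nonsquare by force
    moreover have "norm3 m C \<noteq> 1"
      by (rule norm3_ne_1_if_nonsquare[OF m_pos q_def card nonsquare])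
    moreover have "(x ^ q + x) ^ 3 ^ m = x ^ q + x"
      using trace_fixed[of x] by (simp only: q_def[symmetric])
    ultimately show "\<delta> + norm3 m C / (1 - norm3 m C) *
        (\<Sum>i<m. inverse A ^ 3 ^ i * inverse C ^ ((3 ^ (i + 1) - 1) div 2) * (P x ^ q + P x - B) ^ 3 ^ i)
        = x ^ q + x + \<delta>"
      using char3_telescope_inverts_cubic[OF three \<open>A \<noteq> 0\<close>] by (simp add: trace_P)
  qed
qed

end
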